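(* Let $\mathbb{X},\mathbb{Y}$ be Banach spaces, $\varphi:\mathbb{X}\to\mathbb{Y}$ a continuously differentiable mapping, $A$ a closed subset of $\mathbb{Y}$ and $\bar x\in\varphi^{-1}(A)$. Suppose that $A$ has the Shapiro first order contact property at $\varphi(\bar x)$ and that $\varphi$ is metrically regular around $\bar x$. Then $\varphi^{-1}(A)$ has the Shapiro first order contact property at $\bar x$.
   Context: $\mathbf{B}(a,\delta)$ denotes the open ball with center $a$ and radius $\delta$; $\mathbf{d}(x,D):=\inf\{\|x-y\|:y\in D\}$. "Continuously differentiable" means Fréchet differentiable everywhere with $x\mapsto\nabla\varphi(x)$ continuous in operator norm. For a closed set $C$ and $c\in C$, the Bouligand tangent cone $\mathbf{T}^{\mathbf B}(C,c)$ is the set of all $v$ for which there exist $v_n\to v$ and $t_n\downarrow0$ with $c+t_nv_n\in C$ for all $n$. A closed set $C$ of a Banach space has the Shapiro first order contact property at $a\in C$ if for every $\varepsilon>0$ there is $\delta>0$ such that $\mathbf{d}(x-u,\mathbf{T}^{\mathbf B}(C,u))\le\varepsilon\|x-u\|$ for all $x,u\in C\cap\mathbf{B}(a,\delta)$. A single-valued mapping $\varphi$ is metrically regular around $\bar x$ if there exist $\kappa>0$ and neighborhoods $U$ of $\bar x$ and $V$ of $\varphi(\bar x)$ such that $\mathbf{d}(x,\varphi^{-1}(y))\le\kappa\|\varphi(x)-y\|$ for all $(x,y)\in U\times V$. *)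

theory Defs
  imports "HOL-Analysis.Analysis"
begin

definition cont_diff :: "('a::real_normed_vector \<Rightarrow> 'b::real_normed_vector) \<Rightarrow> bool" where
  "cont_diff f \<longleftrightarrow> (\<exists>f' :: 'a \<Rightarrow> ('a \<Rightarrow>\<^sub>L 'b).
      (\<forall>x. (f has_derivative blinfun_apply (f' x)) (at x)) \<and> continuous_on UNIV f')"

definition bouligand_tangent :: "'a::real_normed_vector set \<Rightarrow> 'a \<Rightarrow> 'a set" where
  "bouligand_tangent C c = {v. \<exists>vs :: nat \<Rightarrow> 'a. \<exists>t :: nat \<Rightarrow> real.
      vs \<longlonglongrightarrow> v \<and> t \<longlonglongrightarrow> 0 \<and> (\<forall>n. t n > 0) \<and> decseq t \<and>
      (\<forall>n. c + t n *\<^sub>R vs n \<in> C)}"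

definition shapiro_contact :: "'a::real_normed_vector set \<Rightarrow> 'a \<Rightarrow> bool" where
  "shapiro_contact C a \<longleftrightarrow> (\<forall>\<epsilon>>0. \<exists>\<delta>>0. \<forall>x\<in>C \<inter> ball a \<delta>. \<forall>u\<in>C \<inter> ball a \<delta>.
      infdist (x - u) (bouligand_tangent C u) \<le> \<epsilon> * norm (x - u))"

definition metrically_regular_around ::
  "('a::real_normed_vector \<Rightarrow> 'b::real_normed_vector) \<Rightarrow> 'a \<Rightarrow> bool" where
  "metrically_regular_around f xbar \<longleftrightarrow> (\<exists>\<kappa>>0. \<exists>U V. open U \<and> xbar \<in> U \<and> open V \<and> f xbar \<in> V \<and>
      (\<forall>y\<in>V. f -` {y} \<noteq> {}) \<and>
      (\<forall>x\<in>U. \<forall>y\<in>V. infdist x (f -` {y}) \<le> \<kappa> * norm (f x - y)))"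

end

theory Submission imports Defs begin

text \<open>Metric regularity of \<open>\<phi>\<close> around \<open>xbar\<close> makes the derivatives \<open>\<phi>' u\<close> near \<open>xbar\<close>
  uniformly open: difference quotients of nearby preimage points solve \<open>\<phi>' u k = y\<close> up to
  half of \<open>\<parallel>y\<parallel>\<close>, and iterating this (completeness of the domain) gives exact solutions with
  \<open>\<parallel>k\<parallel> \<le> M \<parallel>y\<parallel>\<close>. The same construction lifts tangent vectors: \<open>\<phi>' u v \<in> T(A, \<phi> u)\<close>
  implies \<open>v \<in> T(\<phi>\<^sup>-\<^sup>1(A), u)\<close>. Hence \<open>d(x - u, T(\<phi>\<^sup>-\<^sup>1(A), u)) \<le> M d(\<phi>' u (x - u), T(A, \<phi> u))\<close>.
  Continuity of \<open>\<phi>'\<close> gives \<open>\<phi> x - \<phi> u = \<phi>' u (x - u) + o(\<parallel>x - u\<parallel>)\<close> uniformly near \<open>xbar\<close>,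
  and the contact property of \<open>A\<close> bounds \<open>d(\<phi> x - \<phi> u, T(A, \<phi> u))\<close> by
  \<open>\<epsilon> \<parallel>\<phi> x - \<phi> u\<parallel> = O(\<epsilon> \<parallel>x - u\<parallel>)\<close>.\<close>

lemma infdist_lessE:
  assumes "A \<noteq> {}" "infdist x A < r"
  obtains a where "a \<in> A" "dist x a < r"
  using assms by (auto simp: infdist_notempty cINF_less_iff)

lemma infdist_le_linear_preimage:
  fixes D :: "'a::real_normed_vector \<Rightarrow> 'b::real_normed_vector"
  assumes "linear D" and M: "M > 0"
    and surj: "\<And>y. \<exists>h. D h = y \<and> norm h \<le> M * norm y"
    and "D -` W \<subseteq> S" "W \<noteq> {}"
  shows "infdist x S \<le> M * infdist (D x) W"
proof -
  have "infdist x S / M \<le> dist (D x) w" if "w \<in> W" for w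
  proof -
    obtain h where h: "D h = w - D x" "norm h \<le> M * norm (w - D x)"
      using surj by blast
    then have "x + h \<in> S"
      using assms(1,4) \<open>w \<in> W\<close> by (auto simp: linear_add)
    then have "infdist x S \<le> norm h"
      using infdist_le[of "x + h" S x] by (simp add: dist_norm)
    with h(2) M show ?thesis
      by (simp add: divide_le_eq dist_norm norm_minus_commute mult.commute)
  qed
  then have "infdist x S / M \<le> infdist (D x) W"
    using \<open>W \<noteq> {}\<close> by (simp add: infdist_notempty cINF_greatest)
  with M show ?thesis
    by (simp add: divide_le_eq mult.commute)
qed

lemma has_derivative_difference_quotient_sequence:
  fixes f :: "'a::real_normed_vector \<Rightarrow> 'b::real_normed_vector"
  assumes der: "(f has_derivative D) (at u)" and t: "t \<longlonglongrightarrow> 0" "\<And>n. t n \<noteq> 0"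
  shows "(\<lambda>n. (1 / t n) *\<^sub>R (f (u + t n *\<^sub>R v) - f u)) \<longlonglongrightarrow> D v"
proof -
  have line: "((\<lambda>s. u + s *\<^sub>R v) has_derivative (\<lambda>s. s *\<^sub>R v)) (at 0)"
    by (auto intro!: derivative_eq_intros)
  have "((\<lambda>s. f (u + s *\<^sub>R v)) has_derivative (\<lambda>s. s *\<^sub>R D v)) (at 0)"
    using has_derivative_compose[OF line, of f D] der linear_scale[OF has_derivative_linear[OF der]]
    by (simp add: o_def)
  then have "((\<lambda>s. norm (f (u + s *\<^sub>R v) - f u - s *\<^sub>R D v) / norm s) \<longlongrightarrow> 0) (at 0)"
    by (simp add: has_derivative_at)
  then have "(\<lambda>n. norm (f (u + t n *\<^sub>R v) - f u - t n *\<^sub>R D v) / norm (t n)) \<longlonglongrightarrow> 0"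
    by (rule tendsto_compose_eventually) (use t in auto)
  moreover have "norm (f (u + t n *\<^sub>R v) - f u - t n *\<^sub>R D v) / norm (t n)
      = norm ((1 / t n) *\<^sub>R (f (u + t n *\<^sub>R v) - f u) - D v)" for n
  proof -
    have "(1 / t n) *\<^sub>R (f (u + t n *\<^sub>R v) - f u) - D v
        = (1 / t n) *\<^sub>R (f (u + t n *\<^sub>R v) - f u - t n *\<^sub>R D v)"
      using t(2)[of n] by (simp add: scaleR_diff_right)
    then show ?thesis by simp
  qed
  ultimately show ?thesis
    by (simp add: tendsto_norm_zero_iff LIM_zero_iff)
qed

lemma continuous_derivative_uniform_linearization:
  fixes f :: "'a::real_normed_vector \<Rightarrow> 'b::real_normed_vector"
  assumes der: "\<And>x. (f has_derivative blinfun_apply (F x)) (at x)"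
    and F: "isCont F a" and \<eta>: "\<eta> > 0"
  obtains \<delta> where "\<delta> > 0"
    "\<And>x u. x \<in> ball a \<delta> \<Longrightarrow> u \<in> ball a \<delta> \<Longrightarrow> norm (f x - f u - F u (x - u)) \<le> \<eta> * norm (x - u)"
    "\<And>x u. x \<in> ball a \<delta> \<Longrightarrow> u \<in> ball a \<delta> \<Longrightarrow> norm (f x - f u) \<le> (norm (F a) + 2 * \<eta>) * norm (x - u)"
proof -
  obtain \<delta> where \<delta>: "\<delta> > 0" "\<And>z. dist z a < \<delta> \<Longrightarrow> dist (F z) (F a) < \<eta> / 2"
    using F \<eta> unfolding continuous_at_eps_delta by (meson half_gt_zero)
  have lin: "norm (f x - f u - F u (x - u)) \<le> \<eta> * norm (x - u)"
    if x: "x \<in> ball a \<delta>" and u: "u \<in> ball a \<delta>" for x u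
  proof -
    have "norm (f x - f u - F u (x - u)) \<le> norm (x - u) * \<eta>"
    proof (rule differentiable_bound_linearization[where S="ball a \<delta>" and f'="\<lambda>z. blinfun_apply (F z)"])
      fix t :: real assume "t \<in> {0..1}"
      then have "(1 - t) *\<^sub>R u + t *\<^sub>R x \<in> ball a \<delta>"
        using x u by (intro convexD[OF convex_ball]) auto
      then show "u + t *\<^sub>R (x - u) \<in> ball a \<delta>"
        by (simp add: algebra_simps)
    next
      fix z assume "z \<in> ball a \<delta>"
      show "(f has_derivative blinfun_apply (F z)) (at z within ball a \<delta>)"
        using der has_derivative_at_withinI by blast
      have "onorm (blinfun_apply (F z) - blinfun_apply (F u)) = dist (F z) (F u)"
        by (simp add: dist_norm norm_blinfun.rep_eq minus_blinfun.rep_eq fun_diff_def)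
      also have "\<dots> \<le> dist (F z) (F a) + dist (F u) (F a)"
        by (rule dist_triangle2)
      also have "\<dots> \<le> \<eta>"
        using \<delta>(2)[of z] \<delta>(2)[of u] \<open>z \<in> ball a \<delta>\<close> u by (simp add: dist_commute)
      finally show "onorm (blinfun_apply (F z) - blinfun_apply (F u)) \<le> \<eta>" .
    qed (use u in auto)
    then show ?thesis
      by (simp add: mult.commute)
  qed
  have "norm (f x - f u) \<le> (norm (F a) + 2 * \<eta>) * norm (x - u)"
    if x: "x \<in> ball a \<delta>" and u: "u \<in> ball a \<delta>" for x u
  proof -
    have "norm (F u) \<le> norm (F a) + \<eta>"
      using \<delta>(2)[of u] u \<eta> norm_triangle_sub[of "F u" "F a"] by (simp add: dist_norm norm_minus_commute)
    then have "norm (F u (x - u)) \<le> (norm (F a) + \<eta>) * norm (x - u)"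
      by (meson norm_blinfun mult_right_mono norm_ge_zero order_trans)
    then show ?thesis
      using lin[OF x u] norm_triangle_sub[of "f x - f u" "F u (x - u)"] by (simp add: algebra_simps)
  qed
  with \<delta>(1) lin that show ?thesis
    by blast
qed

lemma summable_geometric_half_bound:
  fixes k :: "nat \<Rightarrow> 'a::banach"
  assumes k: "\<And>n. norm (k n) \<le> C * (1/2) ^ n"
  shows "summable k" "norm (suminf k) \<le> 2 * C"
proof -
  have geom: "summable (\<lambda>n. C * (1/2::real) ^ n)"
    by (intro summable_mult summable_geometric) auto
  then have norms: "summable (\<lambda>n. norm (k n))"
    by (rule summable_comparison_test[rotated]) (use k in auto)
  then show "summable k"
    by (rule summable_norm_cancel)
  have "norm (suminf k) \<le> (\<Sum>n. norm (k n))"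
    by (rule summable_norm[OF norms])
  also have "\<dots> \<le> (\<Sum>n. C * (1/2::real) ^ n)"
    by (rule suminf_le[OF k norms geom])
  also have "\<dots> = 2 * C"
    using suminf_geometric[of "1/2::real"] by (simp add: suminf_mult)
  finally show "norm (suminf k) \<le> 2 * C" .
qed

lemma exact_preimage_from_approximate_preimage:
  fixes T :: "'a::banach \<Rightarrow> 'b::real_normed_vector"
  assumes lin: "bounded_linear T" and M: "M \<ge> 0"
    and approx: "\<And>y. \<exists>k. norm k \<le> M * norm y \<and> norm (T k - y) \<le> norm y / 2"
  shows "\<exists>h. T h = y \<and> norm h \<le> 2 * M * norm y"
proof -
  obtain K where K: "\<And>y. norm (K y) \<le> M * norm y" "\<And>y. norm (T (K y) - y) \<le> norm y / 2"
    using approx by metis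
  define res where "res n = ((\<lambda>z. z - T (K z)) ^^ n) y" for n
  have res_Suc: "res (Suc n) = res n - T (K (res n))" for n
    by (simp add: res_def)
  have res_bound: "norm (res n) \<le> norm y * (1/2) ^ n" for n
  proof (induction n)
    case 0
    then show ?case by (simp add: res_def)
  next
    case (Suc n)
    have "norm (res (Suc n)) \<le> norm (res n) / 2"
      using K(2)[of "res n"] by (simp add: res_Suc norm_minus_commute)
    with Suc show ?case
      by simp
  qed
  have "res \<longlonglongrightarrow> 0"
    by (rule Lim_null_comparison[of _ "\<lambda>n. norm y * (1/2) ^ n"])
      (use res_bound in \<open>auto intro!: tendsto_mult_right_zero LIMSEQ_power_zero\<close>)
  then have "(\<lambda>n. res n - res (Suc n)) sums (res 0 - 0)"
    by (rule telescope_sums')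
  then have telescope: "(\<lambda>n. T (K (res n))) sums y"
    by (simp add: res_Suc) (simp add: res_def)
  have "norm (K (res n)) \<le> M * norm y * (1/2) ^ n" for n
    using order_trans[OF K(1) mult_left_mono[OF res_bound M]] by (simp add: mult.assoc)
  note summable = summable_geometric_half_bound[OF this]
  have "T (suminf (\<lambda>n. K (res n))) = y"
    using bounded_linear.suminf[OF lin summable(1)] sums_unique[OF telescope] by simp
  with summable(2) show ?thesis
    by (metis mult.assoc)
qed

lemma metrically_regular_imp_approximate_preimage:
  fixes \<phi> :: "'a::real_normed_vector \<Rightarrow> 'b::real_normed_vector"
  assumes der: "(\<phi> has_derivative D) (at u)" and \<kappa>: "\<kappa> > 0"
    and V: "open V" "\<phi> u \<in> V"
    and ne: "\<forall>y\<in>V. \<phi> -` {y} \<noteq> {}"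
    and reg: "\<forall>y\<in>V. infdist u (\<phi> -` {y}) \<le> \<kappa> * norm (\<phi> u - y)"
  shows "\<exists>k. norm k \<le> (\<kappa> + 1) * norm y \<and> norm (D k - y) \<le> norm y / 2"
proof (cases "y = 0")
  case True
  then show ?thesis
    using linear_0[OF has_derivative_linear[OF der]] by (intro exI[of _ 0]) simp
next
  case False
  define e where "e = 1 / (2 * (\<kappa> + 1))"
  have "e > 0"
    using \<kappa> by (simp add: e_def)
  then obtain d where "d > 0"
    and d: "\<And>z. norm (z - u) < d \<Longrightarrow> norm (\<phi> z - \<phi> u - D (z - u)) \<le> e * norm (z - u)"
    using der unfolding has_derivative_at_alt by blast
  have "((\<lambda>t. (\<kappa> + 1) * t * norm y) \<longlongrightarrow> 0) (at_right 0)"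
    "((\<lambda>t. \<phi> u + t *\<^sub>R y) \<longlongrightarrow> \<phi> u) (at_right 0)"
    by (auto intro!: tendsto_eq_intros)
  then have "\<forall>\<^sub>F t in at_right 0. 0 < t \<and> (\<kappa> + 1) * t * norm y < d \<and> \<phi> u + t *\<^sub>R y \<in> V"
    using \<open>d > 0\<close> V eventually_at_right_less
    by (intro eventually_conj order_tendstoD(2) topological_tendstoD) auto
  then obtain t where t: "t > 0" "(\<kappa> + 1) * t * norm y < d" and tV: "\<phi> u + t *\<^sub>R y \<in> V"
    using eventually_happens[of _ "at_right (0::real)"] by auto
  have "infdist u (\<phi> -` {\<phi> u + t *\<^sub>R y}) \<le> \<kappa> * (t * norm y)"
    using reg tV t(1) by fastforce
  also have "\<dots> < (\<kappa> + 1) * t * norm y"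
    using t(1) False by (simp add: algebra_simps)
  finally obtain z where z: "\<phi> z = \<phi> u + t *\<^sub>R y" "dist u z < (\<kappa> + 1) * t * norm y"
    using infdist_lessE ne tV by (metis vimage_singleton_eq)
  then have nz: "norm (z - u) < (\<kappa> + 1) * t * norm y"
    by (simp add: dist_norm norm_minus_commute)
  define k where "k = (1 / t) *\<^sub>R (z - u)"
  have "norm k \<le> (\<kappa> + 1) * norm y"
    using nz t(1) by (simp add: k_def divide_le_eq mult_ac)
  moreover have "norm (D k - y) \<le> norm y / 2"
  proof -
    have "norm (t *\<^sub>R y - D (z - u)) \<le> e * norm (z - u)"
      using d[of z] nz t(2) z(1) by simp
    also have "\<dots> \<le> e * ((\<kappa> + 1) * t * norm y)"
      using \<open>e > 0\<close> nz by simp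
    also have "\<dots> = t * (norm y / 2)"
      using \<kappa> by (simp add: e_def field_simps)
    finally have "norm (t *\<^sub>R y - D (z - u)) \<le> t * (norm y / 2)" .
    moreover have "t *\<^sub>R D k = D (z - u)"
      using t(1) linear_scale[OF has_derivative_linear[OF der], of t k] by (simp add: k_def)
    ultimately have "norm (t *\<^sub>R (D k - y)) \<le> t * (norm y / 2)"
      by (simp add: scaleR_diff_right norm_minus_commute)
    with t(1) show ?thesis
      by simp
  qed
  ultimately show ?thesis
    by blast
qed

lemma metrically_regular_imp_derivative_preimage:
  fixes \<phi> :: "'a::banach \<Rightarrow> 'b::real_normed_vector"
  assumes der: "(\<phi> has_derivative D) (at u)" and \<kappa>: "\<kappa> > 0"
    and V: "open V" "\<phi> u \<in> V"
    and ne: "\<forall>y\<in>V. \<phi> -` {y} \<noteq> {}"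
    and reg: "\<forall>y\<in>V. infdist u (\<phi> -` {y}) \<le> \<kappa> * norm (\<phi> u - y)"
  shows "\<exists>h. D h = y \<and> norm h \<le> 2 * (\<kappa> + 1) * norm y"
  using \<kappa> metrically_regular_imp_approximate_preimage[OF der \<kappa> V ne reg]
  by (intro exact_preimage_from_approximate_preimage has_derivative_bounded_linear[OF der]) auto

lemma zero_mem_bouligand_tangent:
  assumes "c \<in> C"
  shows "0 \<in> bouligand_tangent C c"
proof -
  have "decseq (\<lambda>n. inverse (real (Suc n)))"
    by (auto simp: decseq_def intro!: le_imp_inverse_le)
  moreover have "(\<lambda>n. inverse (real (Suc n))) \<longlonglongrightarrow> 0"
    by (rule LIMSEQ_inverse_real_of_nat)
  moreover have "(\<lambda>n. 0::'a) \<longlonglongrightarrow> 0"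
    by simp
  ultimately show ?thesis
    unfolding bouligand_tangent_def using assms by fastforce
qed

lemma bouligand_tangentI_close_points:
  assumes t: "t \<longlonglongrightarrow> 0" "\<And>n. t n > 0" "decseq t"
    and p: "eventually (\<lambda>n. p n \<in> C) sequentially"
    and close: "(\<lambda>n. dist (c + t n *\<^sub>R v) (p n) / t n) \<longlonglongrightarrow> 0"
  shows "v \<in> bouligand_tangent C c"
proof -
  define vs where "vs n = (1 / t n) *\<^sub>R (p n - c)" for n
  have "dist (c + t n *\<^sub>R v) (p n) / t n = norm (vs n - v)" for n
  proof -
    have "vs n - v = (1 / t n) *\<^sub>R (p n - (c + t n *\<^sub>R v))"
      using t(2)[of n] by (simp add: vs_def algebra_simps)
    then show ?thesis
      using t(2)[of n] by (simp add: dist_norm norm_minus_commute)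
  qed
  with close have "vs \<longlonglongrightarrow> v"
    by (simp add: tendsto_norm_zero_iff LIM_zero_iff)
  moreover have "c + t n *\<^sub>R vs n = p n" for n
    using t(2)[of n] by (simp add: vs_def)
  with p obtain N where N: "\<And>n. n \<ge> N \<Longrightarrow> c + t n *\<^sub>R vs n \<in> C"
    unfolding eventually_sequentially by auto
  ultimately have "(\<lambda>n. vs (n + N)) \<longlonglongrightarrow> v" "(\<lambda>n. t (n + N)) \<longlonglongrightarrow> 0" "decseq (\<lambda>n. t (n + N))"
    using LIMSEQ_ignore_initial_segment t(1,3) by (blast, blast, auto simp: decseq_def)
  then show ?thesis
    unfolding bouligand_tangent_def using t(2) N by fastforce
qed

lemma bouligand_tangent_preimage:
  fixes \<phi> :: "'a::real_normed_vector \<Rightarrow> 'b::real_normed_vector"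
  assumes der: "(\<phi> has_derivative D) (at u)"
    and U: "open U" "u \<in> U" and V: "open V" "\<phi> u \<in> V"
    and ne: "\<forall>y\<in>V. \<phi> -` {y} \<noteq> {}"
    and reg: "\<forall>x\<in>U. \<forall>y\<in>V. infdist x (\<phi> -` {y}) \<le> \<kappa> * norm (\<phi> x - y)"
    and w: "D v \<in> bouligand_tangent A (\<phi> u)"
  shows "v \<in> bouligand_tangent (\<phi> -` A) u"
proof -
  obtain ws t where ws: "ws \<longlonglongrightarrow> D v" and t: "t \<longlonglongrightarrow> 0" "\<And>n. t n > 0" "decseq t"
    and tA: "\<And>n. \<phi> u + t n *\<^sub>R ws n \<in> A"
    using w unfolding bouligand_tangent_def by blast
  define x where "x n = u + t n *\<^sub>R v" for n
  define y where "y n = \<phi> u + t n *\<^sub>R ws n" for n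
  have "x \<longlonglongrightarrow> u" "y \<longlonglongrightarrow> \<phi> u"
    unfolding x_def y_def by (auto intro!: tendsto_eq_intros t ws)
  then have near: "eventually (\<lambda>n. x n \<in> U \<and> y n \<in> V) sequentially"
    using U V by (intro eventually_conj topological_tendstoD)
  \<comment> \<open>The slack \<open>t n ^ 2\<close> is \<open>o(t n)\<close>, so an almost nearest preimage point suffices.\<close>
  have "\<exists>z. \<phi> z = y n \<and> dist (x n) z < \<kappa> * norm (\<phi> (x n) - y n) + t n ^ 2"
    if n: "x n \<in> U \<and> y n \<in> V" for n
  proof -
    have "infdist (x n) (\<phi> -` {y n}) \<le> \<kappa> * norm (\<phi> (x n) - y n)"
      using reg n by blast
    moreover have "0 < t n ^ 2"
      using t(2)[of n] by simp
    ultimately have "infdist (x n) (\<phi> -` {y n}) < \<kappa> * norm (\<phi> (x n) - y n) + t n ^ 2"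
      by linarith
    then show ?thesis
      using infdist_lessE ne n by (metis vimage_singleton_eq)
  qed
  then obtain z where z: "\<And>n. x n \<in> U \<and> y n \<in> V \<Longrightarrow>
      \<phi> (z n) = y n \<and> dist (x n) (z n) < \<kappa> * norm (\<phi> (x n) - y n) + t n ^ 2"
    by metis
  define r where "r n = (1 / t n) *\<^sub>R (\<phi> (x n) - \<phi> u)" for n
  have r: "r \<longlonglongrightarrow> D v"
    unfolding r_def x_def using has_derivative_difference_quotient_sequence[OF der t(1)] t(2)
    by (metis less_irrefl)
  have "eventually (\<lambda>n. norm (dist (x n) (z n) / t n) \<le> \<kappa> * norm (r n - ws n) + t n) sequentially"
  proof (rule eventually_mono[OF near])
    fix n assume n: "x n \<in> U \<and> y n \<in> V"
    have "dist (x n) (z n) / t n \<le> (\<kappa> * norm (\<phi> (x n) - y n) + t n ^ 2) / t n"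
      using z[OF n] t(2)[of n] by (intro divide_right_mono) auto
    also have "\<phi> (x n) - y n = t n *\<^sub>R (r n - ws n)"
      using t(2)[of n] by (simp add: r_def y_def algebra_simps)
    also have "(\<kappa> * norm (t n *\<^sub>R (r n - ws n)) + t n ^ 2) / t n = \<kappa> * norm (r n - ws n) + t n"
      using t(2)[of n] by (simp add: power2_eq_square add_divide_distrib)
    finally show "norm (dist (x n) (z n) / t n) \<le> \<kappa> * norm (r n - ws n) + t n"
      using t(2)[of n] by simp
  qed
  moreover have "(\<lambda>n. \<kappa> * norm (r n - ws n) + t n) \<longlonglongrightarrow> 0"
    by (auto intro!: tendsto_eq_intros r ws t)
  ultimately have "(\<lambda>n. dist (x n) (z n) / t n) \<longlonglongrightarrow> 0"
    by (rule Lim_null_comparison)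
  moreover have "eventually (\<lambda>n. z n \<in> \<phi> -` A) sequentially"
    using near by (rule eventually_mono) (use z tA in \<open>simp add: y_def\<close>)
  ultimately show ?thesis
    unfolding x_def by (rule bouligand_tangentI_close_points[OF t, rotated])
qed

lemma infdist_tangent_preimage_le:
  fixes \<phi> :: "'a::real_normed_vector \<Rightarrow> 'b::real_normed_vector"
  assumes "linear D" "M > 0" "\<And>y. \<exists>h. D h = y \<and> norm h \<le> M * norm y"
    and "\<And>v. D v \<in> bouligand_tangent A (\<phi> u) \<Longrightarrow> v \<in> bouligand_tangent (\<phi> -` A) u"
    and "\<phi> u \<in> A" "\<epsilon> \<ge> 0"
    and contact: "infdist (\<phi> x - \<phi> u) (bouligand_tangent A (\<phi> u)) \<le> \<epsilon> * norm (\<phi> x - \<phi> u)"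
    and lip: "norm (\<phi> x - \<phi> u) \<le> L * norm (x - u)"
    and lin: "norm (\<phi> x - \<phi> u - D (x - u)) \<le> \<eta> * norm (x - u)"
  shows "infdist (x - u) (bouligand_tangent (\<phi> -` A) u) \<le> M * (\<epsilon> * L + \<eta>) * norm (x - u)"
proof -
  have "infdist (x - u) (bouligand_tangent (\<phi> -` A) u) \<le> M * infdist (D (x - u)) (bouligand_tangent A (\<phi> u))"
    using assms zero_mem_bouligand_tangent[of "\<phi> u" A] by (intro infdist_le_linear_preimage) auto
  also have "\<dots> \<le> M * (infdist (\<phi> x - \<phi> u) (bouligand_tangent A (\<phi> u)) + norm (\<phi> x - \<phi> u - D (x - u)))"
    using \<open>M > 0\<close> infdist_triangle[of "D (x - u)" _ "\<phi> x - \<phi> u"]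
    by (simp add: dist_norm norm_minus_commute)
  also have "\<dots> \<le> M * (\<epsilon> * (L * norm (x - u)) + \<eta> * norm (x - u))"
    using contact mult_left_mono[OF lip \<open>\<epsilon> \<ge> 0\<close>] lin \<open>M > 0\<close> by (intro mult_left_mono add_mono) auto
  finally show ?thesis
    by (simp add: algebra_simps)
qed

lemma shapiro_contact_preimageI:
  fixes \<phi> :: "'a::real_normed_vector \<Rightarrow> 'b::real_normed_vector"
  assumes der: "\<And>x. (\<phi> has_derivative blinfun_apply (F x)) (at x)" and F: "isCont F a"
    and A: "shapiro_contact A (\<phi> a)"
    and W: "open W" "a \<in> W" and M: "M > 0"
    and surj: "\<And>u y. u \<in> W \<Longrightarrow> \<exists>h. F u h = y \<and> norm h \<le> M * norm y"
    and pull: "\<And>u v. u \<in> W \<Longrightarrow> F u v \<in> bouligand_tangent A (\<phi> u) \<Longrightarrow>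
      v \<in> bouligand_tangent (\<phi> -` A) u"
  shows "shapiro_contact (\<phi> -` A) a"
  unfolding shapiro_contact_def
proof (intro allI impI)
  fix \<epsilon> :: real assume \<epsilon>: "\<epsilon> > 0"
  define L where "L = norm (F a) + 2"
  define \<eta> where "\<eta> = min 1 (\<epsilon> / (2 * M))"
  define \<epsilon>' where "\<epsilon>' = \<epsilon> / (2 * M * L)"
  have "L > 0"
    by (simp add: L_def add_nonneg_pos)
  have \<eta>: "\<eta> > 0" "\<eta> \<le> 1" and \<epsilon>': "\<epsilon>' > 0" and "M * (\<epsilon>' * L + \<eta>) \<le> \<epsilon>"
    using \<epsilon> M \<open>L > 0\<close> by (auto simp: \<eta>_def \<epsilon>'_def min_def field_simps)
  obtain \<delta>A where "\<delta>A > 0" and contact: "\<And>y w. y \<in> A \<inter> ball (\<phi> a) \<delta>A \<Longrightarrow> w \<in> A \<inter> ball (\<phi> a) \<delta>A \<Longrightarrow>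
      infdist (y - w) (bouligand_tangent A w) \<le> \<epsilon>' * norm (y - w)"
    using A \<epsilon>' unfolding shapiro_contact_def by blast
  obtain \<delta>L where "\<delta>L > 0"
    and lin: "\<And>x u. x \<in> ball a \<delta>L \<Longrightarrow> u \<in> ball a \<delta>L \<Longrightarrow>
      norm (\<phi> x - \<phi> u - F u (x - u)) \<le> \<eta> * norm (x - u)"
    and lip: "\<And>x u. x \<in> ball a \<delta>L \<Longrightarrow> u \<in> ball a \<delta>L \<Longrightarrow>
      norm (\<phi> x - \<phi> u) \<le> (norm (F a) + 2 * \<eta>) * norm (x - u)"
    using continuous_derivative_uniform_linearization[OF der F \<eta>(1)] by blast
  have "isCont \<phi> a"
    using der has_derivative_continuous by blast
  then have "(\<phi> \<longlongrightarrow> \<phi> a) (nhds a)"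
    by (simp add: isCont_def tendsto_at_iff_tendsto_nhds)
  then have "\<forall>\<^sub>F z in nhds a. z \<in> ball a \<delta>L \<and> z \<in> W \<and> \<phi> z \<in> ball (\<phi> a) \<delta>A"
    using W \<open>\<delta>L > 0\<close> \<open>\<delta>A > 0\<close>
    by (intro eventually_conj topological_tendstoD[OF filterlim_ident] topological_tendstoD) auto
  then obtain \<delta> where "\<delta> > 0"
    and near: "\<And>z. z \<in> ball a \<delta> \<Longrightarrow> z \<in> ball a \<delta>L \<and> z \<in> W \<and> \<phi> z \<in> ball (\<phi> a) \<delta>A"
    unfolding eventually_nhds_metric by (auto simp: dist_commute)
  have "infdist (x - u) (bouligand_tangent (\<phi> -` A) u) \<le> \<epsilon> * norm (x - u)"
    if x: "x \<in> \<phi> -` A \<inter> ball a \<delta>" and u: "u \<in> \<phi> -` A \<inter> ball a \<delta>" for x u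
  proof -
    have balls: "x \<in> ball a \<delta>L" "u \<in> ball a \<delta>L" "u \<in> W" "\<phi> x \<in> ball (\<phi> a) \<delta>A" "\<phi> u \<in> ball (\<phi> a) \<delta>A"
      using near x u by auto
    have "(norm (F a) + 2 * \<eta>) * norm (x - u) \<le> L * norm (x - u)"
      using \<eta>(2) by (intro mult_right_mono) (auto simp: L_def)
    then have "norm (\<phi> x - \<phi> u) \<le> L * norm (x - u)"
      using lip[OF balls(1,2)] by linarith
    then have "infdist (x - u) (bouligand_tangent (\<phi> -` A) u) \<le> M * (\<epsilon>' * L + \<eta>) * norm (x - u)"
      using x u balls \<epsilon>' contact[of "\<phi> x" "\<phi> u"] lin[OF balls(1,2)]
      by (intro infdist_tangent_preimage_le[OF bounded_linear.linear[OF blinfun.bounded_linear_right]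
          M surj[OF balls(3)] pull[OF balls(3)]]) auto
    also have "\<dots> \<le> \<epsilon> * norm (x - u)"
      using \<open>M * (\<epsilon>' * L + \<eta>) \<le> \<epsilon>\<close> by (intro mult_right_mono) auto
    finally show ?thesis .
  qed
  with \<open>\<delta> > 0\<close> show "\<exists>\<delta>>0. \<forall>x\<in>\<phi> -` A \<inter> ball a \<delta>. \<forall>u\<in>\<phi> -` A \<inter> ball a \<delta>.
      infdist (x - u) (bouligand_tangent (\<phi> -` A) u) \<le> \<epsilon> * norm (x - u)"
    by blast
qed

theorem proposition3p4:
  fixes \<phi> :: "'a::banach \<Rightarrow> 'b::banach" and A :: "'b set" and xbar :: 'a
  assumes "cont_diff \<phi>"
    and "closed A"
    and "xbar \<in> \<phi> -` A"
    and "shapiro_contact A (\<phi> xbar)"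
    and "metrically_regular_around \<phi> xbar"
  shows "shapiro_contact (\<phi> -` A) xbar"
proof -
  obtain F where der: "\<And>x. (\<phi> has_derivative blinfun_apply (F x)) (at x)"
    and "continuous_on UNIV F"
    using assms(1) unfolding cont_diff_def by blast
  then have "isCont F xbar"
    by (simp add: continuous_on_eq_continuous_at)
  obtain \<kappa> U V where "\<kappa> > 0" and U: "open U" "xbar \<in> U" and V: "open V" "\<phi> xbar \<in> V"
    and ne: "\<forall>y\<in>V. \<phi> -` {y} \<noteq> {}"
    and reg: "\<forall>x\<in>U. \<forall>y\<in>V. infdist x (\<phi> -` {y}) \<le> \<kappa> * norm (\<phi> x - y)"
    using assms(5) unfolding metrically_regular_around_def by metis
  define W where "W = U \<inter> \<phi> -` V"
  have "continuous_on UNIV \<phi>"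
    by (intro continuous_at_imp_continuous_on ballI has_derivative_continuous[OF der])
  then have "open W"
    unfolding W_def by (intro open_Int U(1) open_vimage V(1))
  show ?thesis
  proof (rule shapiro_contact_preimageI[OF der \<open>isCont F xbar\<close> assms(4) \<open>open W\<close>])
    show "xbar \<in> W" "2 * (\<kappa> + 1) > 0"
      using U V \<open>\<kappa> > 0\<close> by (auto simp: W_def)
  next
    fix u assume "u \<in> W"
    then have u: "u \<in> U" "\<phi> u \<in> V"
      by (auto simp: W_def)
    show "\<exists>h. F u h = y \<and> norm h \<le> 2 * (\<kappa> + 1) * norm y" for y
      using metrically_regular_imp_derivative_preimage[OF der \<open>\<kappa> > 0\<close> V(1) u(2) ne] reg u(1) by blast
    show "v \<in> bouligand_tangent (\<phi> -` A) u" if "F u v \<in> bouligand_tangent A (\<phi> u)" for v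
      using bouligand_tangent_preimage[OF der U(1) u(1) V(1) u(2) ne reg that] .
  qed
qed

end
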